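(* Let $m\geq 3$ and $n\geq 2$ be integers, let $C_m$ be the cycle of order $m$ and $H_n$ a graph of order $n$. Then $rvc(C_m\diamond H_n)=1$ if $m=3$, and $rvc(C_m\diamond H_n)=\lceil m/2\rceil$ if $m\geq 4$.
   Context: All graphs are finite, simple, connected and undirected. A rainbow vertex $k$-coloring of $G$ is a map $c:V(G)\to\{1,\dots,k\}$ such that every two vertices are joined by a path whose internal vertices all receive distinct colors; $rvc(G)$ is the least $k$ for which $G$ has one. For graphs $G_m$ (order $m$) and $H_n$ (order $n$) on disjoint vertex sets, the edge corona $G_m\diamond H_n$ is obtained from one copy of $G_m$ and $|E(G_m)|$ vertex-disjoint copies of $H_n$, one per edge of $G_m$, by joining both end vertices of the $j$-th edge of $G_m$ to every vertex of the $j$-th copy of $H_n$. *)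

theory Defs
  imports Complex_Main
begin

definition simple_graph :: "'a set \<Rightarrow> 'a set set \<Rightarrow> bool" where
  "simple_graph V E \<longleftrightarrow> finite V \<and>
     (\<forall>e\<in>E. \<exists>u v. e = {u, v} \<and> u \<noteq> v \<and> u \<in> V \<and> v \<in> V)"

definition is_path :: "'a set \<Rightarrow> 'a set set \<Rightarrow> 'a list \<Rightarrow> bool" where
  "is_path V E p \<longleftrightarrow> p \<noteq> [] \<and> distinct p \<and> set p \<subseteq> V \<and>
     (\<forall>i. Suc i < length p \<longrightarrow> {p ! i, p ! Suc i} \<in> E)"

definition connected_graph :: "'a set \<Rightarrow> 'a set set \<Rightarrow> bool" where
  "connected_graph V E \<longleftrightarrow> V \<noteq> {} \<and>
     (\<forall>u\<in>V. \<forall>v\<in>V. \<exists>p. is_path V E p \<and> hd p = u \<and> last p = v)"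

definition internal :: "'a list \<Rightarrow> 'a set" where
  "internal p = set (butlast (tl p))"

definition rainbow_vertex_coloring ::
    "'a set \<Rightarrow> 'a set set \<Rightarrow> nat \<Rightarrow> ('a \<Rightarrow> nat) \<Rightarrow> bool" where
  "rainbow_vertex_coloring V E k c \<longleftrightarrow>
     (\<forall>v\<in>V. c v \<in> {1..k}) \<and>
     (\<forall>u\<in>V. \<forall>v\<in>V. \<exists>p. is_path V E p \<and> hd p = u \<and> last p = v \<and>
                         inj_on c (internal p))"

definition rvc :: "'a set \<Rightarrow> 'a set set \<Rightarrow> nat" where
  "rvc V E = (LEAST k. \<exists>c. rainbow_vertex_coloring V E k c)"

definition cycle_V :: "nat \<Rightarrow> nat set" where
  "cycle_V m = {0..<m}"

definition cycle_E :: "nat \<Rightarrow> nat set set" where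
  "cycle_E m = {{i, Suc i mod m} | i. i < m}"

text \<open>Edge corona: vertices of G are Inl v; the copy of vertex h of H attached to
  the edge e of G is Inr (e, h).\<close>
definition corona_V :: "'a set \<Rightarrow> 'a set set \<Rightarrow> 'b set \<Rightarrow> ('a + ('a set \<times> 'b)) set" where
  "corona_V VG EG VH = Inl ` VG \<union> {Inr (e, h) | e h. e \<in> EG \<and> h \<in> VH}"

definition corona_E :: "'a set \<Rightarrow> 'a set set \<Rightarrow> 'b set \<Rightarrow> 'b set set
    \<Rightarrow> ('a + ('a set \<times> 'b)) set set" where
  "corona_E VG EG VH EH =
     {{Inl u, Inl v} | u v. {u, v} \<in> EG}
     \<union> {{Inr (e, x), Inr (e, y)} | e x y. e \<in> EG \<and> {x, y} \<in> EH}
     \<union> {{Inl u, Inr (e, h)} | u e h. e \<in> EG \<and> u \<in> e \<and> h \<in> VH}"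

end

theory Submission
  imports Defs "HOL-Number_Theory.Cong"
begin

text \<open>
  Upper bound: for \<open>m \<ge> 4\<close> colour the cycle vertex \<open>i\<close> with \<open>i mod \<lceil>m/2\<rceil> + 1\<close>
  and every vertex of the copies of \<open>H\<close> with \<open>1\<close>. Any two vertices are joined by a path
  whose internal vertices form an arc of at most \<open>\<lfloor>m/2\<rfloor>\<close> consecutive cycle vertices,
  and such an arc is rainbow because \<open>\<lfloor>m/2\<rfloor> \<le> \<lceil>m/2\<rceil> \<le> m - \<lfloor>m/2\<rfloor>\<close>.
  For \<open>m = 3\<close> these arcs have at most one vertex, so one colour suffices.

  Lower bound: path lengths are bounded below by integer potentials that change by at most
  one along every edge. For \<open>m = 2r\<close> the copies of \<open>H\<close> on two opposite edges are at
  distance \<open>r + 1\<close>, which forces \<open>r\<close> colours. For \<open>m = 2r + 1\<close> and only \<open>r\<close> colours,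
  a rainbow path between the copies on the two edges just outside a window of \<open>r\<close>
  consecutive cycle vertices cannot go the long way round, so it passes through the whole
  window; hence every window uses all \<open>r\<close> colours, which gives
  \<open>c 0 = c r = c (2r)\<close>, although \<open>2r\<close> and \<open>0\<close> lie in a common window.
\<close>


section \<open>Paths and rainbow colourings\<close>

lemma is_path_iff_successively:
  "is_path V E p \<longleftrightarrow>
     p \<noteq> [] \<and> distinct p \<and> set p \<subseteq> V \<and> successively (\<lambda>x y. {x, y} \<in> E) p"
  by (simp add: is_path_def successively_conv_nth)

lemma is_path_rev: "is_path V E p \<Longrightarrow> is_path V E (rev p)"
  by (simp add: is_path_iff_successively insert_commute)

lemma internal_rev: "internal (rev p) = internal p"
proof -
  have "tl (rev p) = rev (butlast p)"
    by (metis butlast_rev rev_rev_ident)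
  then show ?thesis by (simp add: internal_def butlast_tl butlast_rev)
qed

lemma internal_Cons_snoc: "internal (u # xs @ [v]) = set xs"
  by (simp add: internal_def)

lemma internal_subset: "internal p \<subseteq> set p"
  by (cases p) (auto simp: internal_def dest: in_set_butlastD)

lemma card_internal: "distinct p \<Longrightarrow> card (internal p) = length p - 2"
  by (simp add: internal_def distinct_card distinct_tl distinct_butlast)

lemma internalI:
  assumes "y \<in> set p" "y \<noteq> hd p" "y \<noteq> last p"
  shows "y \<in> internal p"
proof -
  obtain z zs where p: "p = z # zs" using assms(1) by (cases p) auto
  then have "y \<in> set zs" "zs \<noteq> []" using assms by auto
  moreover have "y \<in> set (butlast ys)" if "y \<in> set ys" "y \<noteq> last ys" for ys :: "'a list"
    using that by (induction ys) auto
  ultimately have "y \<in> set (butlast zs)" using assms(3) p by simp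
  then show ?thesis using p by (simp add: internal_def)
qed

lemma card_internal_le_colours:
  assumes "rainbow_vertex_coloring V E k c" "is_path V E p" "inj_on c (internal p)"
  shows "card (internal p) \<le> k"
proof -
  have "internal p \<subseteq> V"
    using assms(2) internal_subset by (fastforce simp: is_path_def)
  then have "c ` internal p \<subseteq> {1..k}"
    using assms(1) by (auto simp: rainbow_vertex_coloring_def)
  then have "card (internal p) \<le> card {1..k}"
    using card_inj_on_le[OF assms(3)] by blast
  then show ?thesis by simp
qed

lemma rainbow_colours_ge_of_long_paths:
  assumes "rainbow_vertex_coloring V E k c" "u \<in> V" "v \<in> V"
    and "\<And>p. is_path V E p \<Longrightarrow> hd p = u \<Longrightarrow> last p = v \<Longrightarrow> n + 2 \<le> length p"
  shows "n \<le> k"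
proof -
  obtain p where p: "is_path V E p" "hd p = u" "last p = v" "inj_on c (internal p)"
    using assms(1-3) unfolding rainbow_vertex_coloring_def by blast
  have "n \<le> card (internal p)"
    using assms(4)[OF p(1-3)] p(1) by (simp add: is_path_def card_internal)
  also have "\<dots> \<le> k" by (rule card_internal_le_colours[OF assms(1) p(1,4)])
  finally show ?thesis .
qed

lemma potential_path_bound:
  fixes F :: "'a \<Rightarrow> int"
  assumes "successively (\<lambda>y z. \<bar>F y - F z\<bar> \<le> 1) p" "p \<noteq> []"
  shows "\<bar>F (hd p) - F (last p)\<bar> \<le> int (length p) - 1"
  using assms by (induction "\<lambda>y z. \<bar>F y - F z\<bar> \<le> (1::int)" p rule: successively.induct) auto

section \<open>Arcs and distances on a cycle\<close>

lemma mod_add_left_cancel: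
  fixes m t t' :: nat
  assumes "t < m" "t' < m" "(s + t) mod m = (s + t') mod m"
  shows "t = t'"
proof -
  have "[t = t'] (mod m)" using assms(3) cong_add_lcancel_nat unfolding cong_def by blast
  then show ?thesis using assms(1,2) by (simp add: cong_def)
qed

lemma mod_add_left_cancel_iff:
  fixes m t t' :: nat
  assumes "t < m" "t' < m"
  shows "(s + t) mod m = (s + t') mod m \<longleftrightarrow> t = t'"
  using assms mod_add_left_cancel by blast

lemma mod_add_eq_self_iff:
  fixes a m t :: nat
  assumes "a < m" "t < m"
  shows "(a + t) mod m = a \<longleftrightarrow> t = 0"
  using mod_add_left_cancel_iff[of 0 m t a] assms by auto

lemma Suc_mod_eq_if: "b < m \<Longrightarrow> Suc b mod m = (if Suc b = m then 0 else Suc b)"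
  by (simp add: mod_Suc)

lemma mod_eq_cases_less_double:
  fixes x y K :: nat
  assumes "x < 2 * K" "y < 2 * K" "x mod K = y mod K"
  shows "x = y \<or> x = y + K \<or> y = x + K"
proof -
  have "x = y mod K + K * (x div K)" "y = y mod K + K * (y div K)"
    using mod_mult_div_eq[of x K] mod_mult_div_eq[of y K] assms(3) by simp_all
  moreover have "x div K < 2" "y div K < 2"
    using less_mult_imp_div_less[OF assms(1)] less_mult_imp_div_less[OF assms(2)] by simp_all
  ultimately obtain i j where "x = y mod K + K * i" "y = y mod K + K * j" "i < 2" "j < 2"
    by blast
  then show ?thesis using less_2_cases by (cases i; cases j) auto
qed

lemma Suc_mod_add_pred: "0 < m \<Longrightarrow> Suc ((s + (m - 1)) mod m) mod m = s mod m"
  by (simp add: mod_Suc_eq)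

lemma nat_ceiling_half: "nat \<lceil>real m / 2\<rceil> = m - m div 2"
proof (cases "even m")
  case True
  then show ?thesis by (auto elim!: evenE)
next
  case False
  then obtain q where q: "m = 2 * q + 1" using oddE by blast
  have "\<lceil>real m / 2\<rceil> = int q + 1"
    by (rule ceiling_unique) (use q in simp_all)
  then show ?thesis using q by simp
qed

lemma cycle_offset_exists:
  fixes a b m :: nat
  assumes "a < m" "b < m"
  shows "\<exists>d<m. b = (a + d) mod m \<and> a = (b + (m - d)) mod m"
proof (cases "a \<le> b")
  case True
  then show ?thesis using assms by (intro exI[of _ "b - a"]) simp
next
  case False
  then have "b + (m - (b + m - a)) = a" "a + (b + m - a) = b + m" using assms by linarith+
  then show ?thesis using assms False by (intro exI[of _ "b + m - a"]) simp
qed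

definition cycle_arc :: "nat \<Rightarrow> nat \<Rightarrow> nat \<Rightarrow> nat list" where
  "cycle_arc m s L = map (\<lambda>t. (s + t) mod m) [0..<L]"

lemma mem_cycle_arc: "x \<in> set (cycle_arc m s L) \<longleftrightarrow> (\<exists>t<L. x = (s + t) mod m)"
  by (auto simp: cycle_arc_def)

lemma length_cycle_arc [simp]: "length (cycle_arc m s L) = L"
  by (simp add: cycle_arc_def)

lemma hd_cycle_arc: "0 < L \<Longrightarrow> hd (cycle_arc m s L) = s mod m"
  by (simp add: cycle_arc_def hd_map)

lemma last_cycle_arc: "0 < L \<Longrightarrow> last (cycle_arc m s L) = (s + L - 1) mod m"
  by (simp add: cycle_arc_def last_map)

lemma distinct_cycle_arc:
  assumes "L \<le> m"
  shows "distinct (cycle_arc m s L)"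
  unfolding cycle_arc_def distinct_map
proof (intro conjI inj_onI)
  fix t t' assume "t \<in> set [0..<L]" "t' \<in> set [0..<L]" "(s + t) mod m = (s + t') mod m"
  then show "t = t'" using assms mod_add_left_cancel[of t m t' s] by simp
qed simp

lemma successively_cycle_arc: "successively (\<lambda>x y. y = Suc x mod m) (cycle_arc m s L)"
  by (simp add: cycle_arc_def successively_conv_nth mod_Suc_eq)

lemma cycle_arc_not_antipodal:
  fixes m K L t t' :: nat
  assumes "L + K \<le> m" "m \<le> 2 * K" "t < L" "t' < L"
  shows "(s + t) mod m \<noteq> (s + t') mod m + K"
proof
  assume eq: "(s + t) mod m = (s + t') mod m + K"
  have "(s + t) mod m < m" using assms by simp
  then have "(s + (t' + K)) mod m = (s + t') mod m + K"
    using eq by (metis add.assoc mod_add_left_eq mod_less)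
  then have "t = t' + K"
    using eq assms by (intro mod_add_left_cancel[of t m "t' + K" s]) auto
  then show False using assms by linarith
qed

lemma inj_on_mod_cycle_arc:
  fixes K m L :: nat
  assumes "L + K \<le> m" "m \<le> 2 * K"
  shows "inj_on (\<lambda>x. x mod K) (set (cycle_arc m s L))"
proof (rule inj_onI)
  fix x y assume "x \<in> set (cycle_arc m s L)" "y \<in> set (cycle_arc m s L)" and eq: "x mod K = y mod K"
  then obtain t t' where t: "t < L" "x = (s + t) mod m" "t' < L" "y = (s + t') mod m"
    by (auto simp: mem_cycle_arc)
  have "0 < m" using t assms by linarith
  then have "x < m" "y < m" using t by simp_all
  then have "x < 2 * K" "y < 2 * K" using assms(2) by linarith+
  then have "x = y \<or> x = y + K \<or> y = x + K" using eq by (rule mod_eq_cases_less_double)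
  then show "x = y" using cycle_arc_not_antipodal[OF assms] t by metis
qed

lemma cyclic_windows_not_rainbow:
  fixes col :: "nat \<Rightarrow> nat"
  assumes m: "m = 2 * r + 1" and "2 \<le> r" "k \<le> r"
    and inj: "\<And>s. inj_on col (set (cycle_arc m s r))"
    and range: "\<And>x. x < m \<Longrightarrow> col x \<in> {1..k}"
  shows False
proof -
  have onto: "col ` set (cycle_arc m s r) = {1..k}" for s
  proof -
    have sub: "col ` set (cycle_arc m s r) \<subseteq> {1..k}" using range m by (auto simp: mem_cycle_arc)
    have "card (col ` set (cycle_arc m s r)) = r"
      using card_image[OF inj] distinct_card[OF distinct_cycle_arc] m by simp
    then have "card (col ` set (cycle_arc m s r)) = card {1..k}"
      using card_mono[OF _ sub] \<open>k \<le> r\<close> by simp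
    then show ?thesis using sub by (intro card_subset_eq) simp_all
  qed
  have shift: "col ((s + r) mod m) = col (s mod m)" for s
  proof -
    have "col ((s + r) mod m) \<in> col ` set (cycle_arc m s r)"
      using onto range m by simp
    then obtain t where t: "t < r" "col ((s + t) mod m) = col ((s + r) mod m)"
      by (auto simp: mem_cycle_arc)
    show ?thesis
    proof (cases t)
      case 0
      then show ?thesis using t by simp
    next
      case (Suc t')
      have "(s + t) mod m = (Suc s + t') mod m" "(s + r) mod m = (Suc s + (r - 1)) mod m"
        using Suc \<open>2 \<le> r\<close> by simp_all
      moreover have "t' < r" "r - 1 < r" using Suc t(1) by simp_all
      ultimately have "(s + t) mod m \<in> set (cycle_arc m (Suc s) r)"
        "(s + r) mod m \<in> set (cycle_arc m (Suc s) r)"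
        unfolding mem_cycle_arc by blast+
      then have "(s + t) mod m = (s + r) mod m"
        using inj_onD[OF inj t(2)] by blast
      then show ?thesis using mod_add_left_cancel[of t m r s] t(1) m by simp
    qed
  qed
  have col_eq: "col (2 * r) = col 0"
    using shift[of 0] shift[of r] m by (simp add: mult_2)
  have "(r + 2 + (r - 2)) mod m = 2 * r" "(r + 2 + (r - 1)) mod m = 0"
    using m \<open>2 \<le> r\<close> by (simp_all add: mult_2)
  moreover have "r - 2 < r" "r - 1 < r" using \<open>2 \<le> r\<close> by simp_all
  ultimately have "2 * r \<in> set (cycle_arc m (r + 2) r)" "0 \<in> set (cycle_arc m (r + 2) r)"
    unfolding mem_cycle_arc by metis+
  then have "2 * r = 0" using inj_onD[OF inj col_eq] by blast
  then show False using \<open>2 \<le> r\<close> by simp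
qed

definition cycle_dist :: "nat \<Rightarrow> nat \<Rightarrow> nat \<Rightarrow> int" where
  "cycle_dist m x y = (int y - int x) mod int m"

lemma cycle_dist_add_add: "cycle_dist m ((s + t) mod m) ((s + j) mod m) = (int j - int t) mod int m"
  by (simp add: cycle_dist_def of_nat_mod mod_simps)

lemma cycle_dist_mod_left: "cycle_dist m (x mod m) = cycle_dist m x"
  by (simp add: fun_eq_iff cycle_dist_def of_nat_mod mod_diff_right_eq)

lemma cycle_dist_add_add_le:
  assumes "i \<le> j" "j - i < m"
  shows "cycle_dist m ((s + i) mod m) ((s + j) mod m) = int (j - i)"
proof -
  have "(int j - int i) mod int m = int j - int i"
    using assms by (intro mod_pos_pos_trivial) linarith+
  then show ?thesis using assms by (simp add: cycle_dist_add_add of_nat_diff)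
qed

lemma cycle_dist_add_add_gt:
  assumes "j < i" "i \<le> m + j"
  shows "cycle_dist m ((s + i) mod m) ((s + j) mod m) = int (m + j - i)"
proof -
  have "(int j - int i) mod int m = (int m + int j - int i) mod int m"
    by (simp add: mod_eq_dvd_iff)
  also have "\<dots> = int m + int j - int i"
    using assms by (intro mod_pos_pos_trivial) linarith+
  finally show ?thesis using assms by (simp add: cycle_dist_add_add of_nat_diff)
qed

lemma cycle_dist_Suc:
  assumes "0 < m" "Suc b mod m \<noteq> x mod m"
  shows "cycle_dist m x (Suc b mod m) = cycle_dist m x b + 1"
proof -
  have "cycle_dist m x (Suc b mod m) = (int b - int x + 1) mod int m"
    by (simp add: cycle_dist_def of_nat_mod mod_diff_left_eq add.commute add_diff_eq)
  also have "\<dots> = (cycle_dist m x b + 1) mod int m"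
    by (simp add: cycle_dist_def mod_add_left_eq)
  finally have eq: "cycle_dist m x (Suc b mod m) = (cycle_dist m x b + 1) mod int m" .
  have "cycle_dist m x b + 1 \<noteq> int m"
  proof
    assume "cycle_dist m x b + 1 = int m"
    then have "cycle_dist m x (Suc b mod m) = 0" using eq by simp
    then have "int (Suc b mod m) mod int m = int x mod int m"
      unfolding cycle_dist_def by (simp add: mod_eq_dvd_iff mod_eq_0_iff_dvd)
    then show False using assms(2) by (simp flip: of_nat_mod)
  qed
  moreover have "0 \<le> cycle_dist m x b" "cycle_dist m x b < int m"
    using assms(1) by (simp_all add: cycle_dist_def)
  ultimately show ?thesis using eq by simp
qed

section \<open>The edge corona of a cycle\<close>

definition cycle_edge :: "nat \<Rightarrow> nat \<Rightarrow> nat set" where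
  "cycle_edge m b = {b, Suc b mod m}"

lemma cycle_E_eq: "cycle_E m = cycle_edge m ` {..<m}"
  by (auto simp: cycle_E_def cycle_edge_def)

lemma cycle_edge_inj:
  assumes "3 \<le> m" "b < m" "b' < m" "cycle_edge m b = cycle_edge m b'"
  shows "b = b'"
  using assms by (auto simp: cycle_edge_def doubleton_eq_iff mod_Suc split: if_splits)

locale cycle_corona =
  fixes m :: nat and VH :: "'b set" and EH :: "'b set set"
  assumes three_le_m: "3 \<le> m" and VH_nonempty: "VH \<noteq> {}"
begin

abbreviation V :: "(nat + nat set \<times> 'b) set" where
  "V \<equiv> corona_V (cycle_V m) (cycle_E m) VH"

abbreviation E :: "(nat + nat set \<times> 'b) set set" where
  "E \<equiv> corona_E (cycle_V m) (cycle_E m) VH EH"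

lemma m_pos [simp]: "0 < m"
  using three_le_m by simp

lemma half_lt_m_minus_1: "m div 2 < m - 1"
  using three_le_m by linarith

lemma V_eq: "V = Inl ` {..<m} \<union> {Inr (cycle_edge m b, h) | b h. b < m \<and> h \<in> VH}"
  unfolding corona_V_def cycle_E_eq cycle_V_def by auto

lemma Inl_in_V: "a < m \<Longrightarrow> Inl a \<in> V"
  by (simp add: V_eq)

lemma Inr_in_V: "b < m \<Longrightarrow> h \<in> VH \<Longrightarrow> Inr (cycle_edge m b, h) \<in> V"
  by (auto simp: V_eq)

lemma Inl_Inl_in_E: "b < m \<Longrightarrow> {Inl b, Inl (Suc b mod m)} \<in> E"
  unfolding corona_E_def cycle_E_def by blast

lemma Inl_Inr_in_E:
  assumes "b < m" "h \<in> VH" "x \<in> cycle_edge m b"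
  shows "{Inl x, Inr (cycle_edge m b, h)} \<in> E" "{Inr (cycle_edge m b, h), Inl x} \<in> E"
proof -
  have "cycle_edge m b \<in> cycle_E m" using assms(1) by (simp add: cycle_E_eq)
  then show "{Inl x, Inr (cycle_edge m b, h)} \<in> E" using assms unfolding corona_E_def by blast
  then show "{Inr (cycle_edge m b, h), Inl x} \<in> E" by (simp add: insert_commute)
qed

lemma corona_E_cases:
  assumes "{y, z} \<in> E"
  obtains (cycle) b where "b < m" "{y, z} = {Inl b, Inl (Suc b mod m)}"
    | (copy) e x x' where "{y, z} = {Inr (e, x), Inr (e, x')}"
    | (spoke) b x w where "b < m" "x \<in> cycle_edge m b" "{y, z} = {Inl x, Inr (cycle_edge m b, w)}"
proof -
  have "{y, z} \<in> {{Inl u, Inl v} | u v. {u, v} \<in> cycle_E m}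
      \<or> {y, z} \<in> {{Inr (e, x), Inr (e, x')} | e x x'. e \<in> cycle_E m \<and> {x, x'} \<in> EH}
      \<or> {y, z} \<in> {{Inl x, Inr (e, w)} | x e w. e \<in> cycle_E m \<and> x \<in> e \<and> w \<in> VH}"
    using assms unfolding corona_E_def by (simp only: Un_iff disj_assoc)
  then consider (cyc) u v where "{y, z} = {Inl u, Inl v}" "{u, v} \<in> cycle_E m"
    | (cp) e x x' where "{y, z} = {Inr (e, x), Inr (e, x')}"
    | (sp) x e w where "{y, z} = {Inl x, Inr (e, w)}" "e \<in> cycle_E m" "x \<in> e"
  proof (elim disjE)
    assume "{y, z} \<in> {{Inl u, Inl v} | u v. {u, v} \<in> cycle_E m}"
    then show thesis using that(1) by blast
  next
    assume "{y, z} \<in> {{Inr (e, x), Inr (e, x')} | e x x'. e \<in> cycle_E m \<and> {x, x'} \<in> EH}"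
    then show thesis using that(2) by blast
  next
    assume "{y, z} \<in> {{Inl x, Inr (e, w)} | x e w. e \<in> cycle_E m \<and> x \<in> e \<and> w \<in> VH}"
    then show thesis using that(3) by blast
  qed
  then show thesis
  proof cases
    case cyc
    then obtain b where b: "b < m" "{u, v} = cycle_edge m b" by (auto simp: cycle_E_eq)
    have "{y, z} = Inl ` {u, v}" using cyc(1) by simp
    also have "\<dots> = {Inl b, Inl (Suc b mod m)}" using b(2) by (simp add: cycle_edge_def)
    finally show thesis by (rule cycle[OF b(1)])
  next
    case cp
    then show thesis by (rule copy)
  next
    case sp
    then obtain b where "b < m" "e = cycle_edge m b" by (auto simp: cycle_E_eq)
    then show thesis using sp spoke by blast
  qed
qed

end

section \<open>Rainbow colourings along short arcs\<close>

definition cycle_mod_colouring :: "nat \<Rightarrow> nat + 'a \<Rightarrow> nat" where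
  "cycle_mod_colouring K y = (case y of Inl i \<Rightarrow> i mod K + 1 | Inr _ \<Rightarrow> 1)"

context cycle_corona
begin

definition short_arc_joined :: "nat + nat set \<times> 'b \<Rightarrow> nat + nat set \<times> 'b \<Rightarrow> bool" where
  "short_arc_joined u v \<longleftrightarrow>
     (\<exists>p s L. is_path V E p \<and> hd p = u \<and> last p = v \<and>
        L \<le> m div 2 \<and> internal p \<subseteq> Inl ` set (cycle_arc m s L))"

lemma short_arc_joined_sym: "short_arc_joined u v \<Longrightarrow> short_arc_joined v u"
  unfolding short_arc_joined_def
  by (metis internal_rev is_path_rev hd_rev last_rev)

lemma short_arc_joined_refl: "u \<in> V \<Longrightarrow> short_arc_joined u u"
  unfolding short_arc_joined_def
  by (intro exI[of _ "[u]"] exI[of _ 0]) (auto simp: is_path_def internal_def)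

lemma short_arc_joined_adjacent:
  "u \<in> V \<Longrightarrow> v \<in> V \<Longrightarrow> u \<noteq> v \<Longrightarrow> {u, v} \<in> E \<Longrightarrow> short_arc_joined u v"
  unfolding short_arc_joined_def
  by (intro exI[of _ "[u, v]"] exI[of _ 0]) (auto simp: is_path_def internal_def)

lemma short_arc_joinedI:
  assumes "u \<in> V" "v \<in> V" "u \<noteq> v" "0 < L" "L \<le> m div 2"
    and "u \<notin> Inl ` set (cycle_arc m s L)" "v \<notin> Inl ` set (cycle_arc m s L)"
    and "{u, Inl (s mod m)} \<in> E" "{Inl ((s + L - 1) mod m), v} \<in> E"
  shows "short_arc_joined u v"
proof -
  let ?A = "map Inl (cycle_arc m s L) :: (nat + nat set \<times> 'b) list"
  have "successively (\<lambda>x y. {x, y} \<in> E) ?A"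
    unfolding successively_map
    by (rule successively_mono[OF successively_cycle_arc]) (auto simp: mem_cycle_arc intro: Inl_Inl_in_E)
  moreover have "?A \<noteq> []" "hd ?A = Inl (s mod m)" "last ?A = Inl ((s + L - 1) mod m)"
    using assms(4) by (simp_all add: hd_map last_map hd_cycle_arc last_cycle_arc cycle_arc_def)
  ultimately have "successively (\<lambda>x y. {x, y} \<in> E) (u # ?A @ [v])"
    using assms(8,9) by (simp add: successively_append_iff successively_Cons)
  moreover have "distinct (u # ?A @ [v])"
    using assms(3,5-7) distinct_cycle_arc[of L m s] by (auto simp: distinct_map)
  moreover have "set ?A \<subseteq> V" by (auto simp: mem_cycle_arc intro!: Inl_in_V)
  ultimately have "is_path V E (u # ?A @ [v])"
    using assms(1,2) by (simp add: is_path_iff_successively)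
  then show ?thesis
    unfolding short_arc_joined_def using assms(5)
    by (intro exI[of _ "u # ?A @ [v]"] exI[of _ s] exI[of _ L]) (auto simp: internal_Cons_snoc)
qed

lemma short_arc_joined_Inl_Inl_forward:
  assumes "a < m" "L \<le> m div 2"
  shows "short_arc_joined (Inl a) (Inl ((a + Suc L) mod m))"
proof -
  have L: "Suc L < m" using assms(2) half_lt_m_minus_1 by linarith
  have ne: "(a + Suc L) mod m \<noteq> a"
    using mod_add_eq_self_iff[OF assms(1) L] by simp
  show ?thesis
  proof (cases "L = 0")
    case True
    then show ?thesis
      using Inl_Inl_in_E[OF assms(1)] ne assms(1) by (intro short_arc_joined_adjacent Inl_in_V) auto
  next
    case False
    have "a \<noteq> (a + Suc t) mod m" "(a + Suc L) mod m \<noteq> (a + Suc t) mod m" if "t < L" for t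
      using mod_add_eq_self_iff[OF assms(1), of "Suc t"] mod_add_left_cancel_iff[of "Suc L" m "Suc t" a]
        that L by simp_all
    then have "Inl a \<notin> Inl ` set (cycle_arc m (Suc a) L)"
      "Inl ((a + Suc L) mod m) \<notin> Inl ` set (cycle_arc m (Suc a) L)"
      by (simp_all add: mem_cycle_arc image_iff)
    moreover have "{Inl ((Suc a + L - 1) mod m), Inl ((a + Suc L) mod m)} \<in> E"
      using Inl_Inl_in_E[of "(a + L) mod m"] False by (simp add: mod_Suc_eq)
    ultimately show ?thesis
      using Inl_Inl_in_E[OF assms(1)] ne assms False
      by (intro short_arc_joinedI[where s = "Suc a" and L = L] Inl_in_V) auto
  qed
qed

lemma short_arc_joined_Inl_Inr_forward:
  assumes "a < m" "L \<le> m div 2" "h \<in> VH"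
  shows "short_arc_joined (Inl a) (Inr (cycle_edge m ((a + L) mod m), h))"
proof (cases "L = 0")
  case True
  then show ?thesis
    using Inl_Inr_in_E(1)[OF assms(1,3)] assms
    by (intro short_arc_joined_adjacent Inl_in_V Inr_in_V) (auto simp: cycle_edge_def)
next
  case False
  have L: "L < m" using assms(2) half_lt_m_minus_1 by linarith
  have "a \<noteq> (a + Suc t) mod m" if "t < L" for t
    using mod_add_eq_self_iff[OF assms(1), of "Suc t"] that L by simp
  then have "Inl a \<notin> Inl ` set (cycle_arc m (Suc a) L)"
    by (auto simp: mem_cycle_arc)
  moreover have "{Inl ((Suc a + L - 1) mod m), Inr (cycle_edge m ((a + L) mod m), h)} \<in> E"
    using Inl_Inr_in_E(1)[of "(a + L) mod m" h "(a + L) mod m"] False assms(3)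
    by (simp add: cycle_edge_def)
  ultimately show ?thesis
    using Inl_Inl_in_E[OF assms(1)] assms False
    by (intro short_arc_joinedI[where s = "Suc a" and L = L] Inl_in_V Inr_in_V) auto
qed

lemma short_arc_joined_Inr_Inl_forward:
  assumes "j < m" "L \<le> m div 2" "h \<in> VH"
  shows "short_arc_joined (Inr (cycle_edge m j, h)) (Inl ((j + Suc L) mod m))"
proof (cases "L = 0")
  case True
  then show ?thesis
    using Inl_Inr_in_E(2)[OF assms(1,3), of "Suc j mod m"] assms
    by (intro short_arc_joined_adjacent Inl_in_V Inr_in_V) (auto simp: cycle_edge_def)
next
  case False
  have L: "Suc L < m" using assms(2) half_lt_m_minus_1 by linarith
  have "(j + Suc L) mod m \<noteq> (j + Suc t) mod m" if "t < L" for t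
    using mod_add_left_cancel_iff[of "Suc L" m "Suc t" j] that L by simp
  then have "Inl ((j + Suc L) mod m) \<notin> Inl ` set (cycle_arc m (Suc j) L)"
    by (simp add: mem_cycle_arc image_iff)
  moreover have "{Inl ((Suc j + L - 1) mod m), Inl ((j + Suc L) mod m)} \<in> E"
    using Inl_Inl_in_E[of "(j + L) mod m"] False by (simp add: mod_Suc_eq)
  moreover have "{Inr (cycle_edge m j, h), Inl (Suc j mod m)} \<in> E"
    using Inl_Inr_in_E(2)[OF assms(1,3)] by (simp add: cycle_edge_def)
  ultimately show ?thesis
    using assms False
    by (intro short_arc_joinedI[where s = "Suc j" and L = L] Inl_in_V Inr_in_V) auto
qed

lemma short_arc_joined_Inr_Inr_forward:
  assumes "i < m" "0 < L" "L \<le> m div 2" "h \<in> VH" "h' \<in> VH"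
  shows "short_arc_joined (Inr (cycle_edge m i, h)) (Inr (cycle_edge m ((i + L) mod m), h'))"
proof -
  have L: "L < m" using assms(3) half_lt_m_minus_1 by linarith
  have "(i + L) mod m \<noteq> i"
    using mod_add_eq_self_iff[OF assms(1) L] assms(2) by simp
  then have "cycle_edge m ((i + L) mod m) \<noteq> cycle_edge m i"
    using cycle_edge_inj[OF three_le_m] assms(1) by auto
  moreover have "{Inr (cycle_edge m i, h), Inl (Suc i mod m)} \<in> E"
    using Inl_Inr_in_E(2)[OF assms(1,4)] by (simp add: cycle_edge_def)
  moreover have "{Inl ((Suc i + L - 1) mod m), Inr (cycle_edge m ((i + L) mod m), h')} \<in> E"
    using Inl_Inr_in_E(1)[of "(i + L) mod m" h' "(i + L) mod m"] assms(2,5)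
    by (simp add: cycle_edge_def)
  ultimately show ?thesis
    using assms by (intro short_arc_joinedI[where s = "Suc i" and L = L] Inr_in_V) auto
qed

lemma short_arc_joined_Inr_same_edge:
  assumes "i < m" "h \<in> VH" "h' \<in> VH"
  shows "short_arc_joined (Inr (cycle_edge m i, h)) (Inr (cycle_edge m i, h'))"
proof (cases "h = h'")
  case True
  then show ?thesis using assms by (simp add: short_arc_joined_refl Inr_in_V)
next
  case False
  have "1 \<le> m div 2" using three_le_m by linarith
  moreover have "{Inr (cycle_edge m i, h), Inl i} \<in> E" "{Inl i, Inr (cycle_edge m i, h')} \<in> E"
    using Inl_Inr_in_E[OF assms(1)] assms(2,3) by (auto simp: cycle_edge_def)
  ultimately show ?thesis
    using assms False by (intro short_arc_joinedI[where s = i and L = 1] Inr_in_V) auto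
qed

lemma short_arc_joined_Inl_Inl:
  assumes "a < m" "b < m"
  shows "short_arc_joined (Inl a) (Inl b)"
proof -
  obtain d where d: "d < m" "b = (a + d) mod m" "a = (b + (m - d)) mod m"
    using cycle_offset_exists[OF assms] by blast
  consider "d = 0" | "0 < d" "d - 1 \<le> m div 2" | "m - d - 1 \<le> m div 2"
    by linarith
  then show ?thesis
  proof cases
    case 1
    then show ?thesis using d(2) assms by (simp add: short_arc_joined_refl Inl_in_V)
  next
    case 2
    then show ?thesis
      using short_arc_joined_Inl_Inl_forward[OF assms(1), of "d - 1"] d(2) by simp
  next
    case 3
    then show ?thesis
      using short_arc_joined_Inl_Inl_forward[OF assms(2), of "m - d - 1"] d(1,3)
      by (simp add: Suc_diff_Suc short_arc_joined_sym)
  qed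
qed

lemma short_arc_joined_Inl_Inr:
  assumes "a < m" "j < m" "h \<in> VH"
  shows "short_arc_joined (Inl a) (Inr (cycle_edge m j, h))"
proof -
  obtain d where d: "d < m" "j = (a + d) mod m" "a = (j + (m - d)) mod m"
    using cycle_offset_exists[OF assms(1,2)] by blast
  consider "d \<le> m div 2" | "m - d - 1 \<le> m div 2"
    by linarith
  then show ?thesis
  proof cases
    case 1
    then show ?thesis
      using short_arc_joined_Inl_Inr_forward[OF assms(1) _ assms(3), of d] d(2) by simp
  next
    case 2
    then show ?thesis
      using short_arc_joined_Inr_Inl_forward[OF assms(2) _ assms(3), of "m - d - 1"] d(1,3)
      by (simp add: Suc_diff_Suc short_arc_joined_sym)
  qed
qed

lemma short_arc_joined_Inr_Inr:
  assumes "i < m" "j < m" "h \<in> VH" "h' \<in> VH"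
  shows "short_arc_joined (Inr (cycle_edge m i, h)) (Inr (cycle_edge m j, h'))"
proof -
  obtain d where d: "d < m" "j = (i + d) mod m" "i = (j + (m - d)) mod m"
    using cycle_offset_exists[OF assms(1,2)] by blast
  consider "d = 0" | "0 < d" "d \<le> m div 2" | "m - d \<le> m div 2"
    by linarith
  then show ?thesis
  proof cases
    case 1
    then show ?thesis using d(2) assms short_arc_joined_Inr_same_edge by simp
  next
    case 2
    then show ?thesis
      using short_arc_joined_Inr_Inr_forward[OF assms(1) _ _ assms(3,4), of d] d(2) by simp
  next
    case 3
    then show ?thesis
      using short_arc_joined_Inr_Inr_forward[OF assms(2) _ _ assms(4,3), of "m - d"] d(1,3)
      by (simp add: short_arc_joined_sym)
  qed
qed

lemma short_arc_joined_all:
  assumes "u \<in> V" "v \<in> V"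
  shows "short_arc_joined u v"
proof -
  have "(\<exists>a<m. w = Inl a) \<or> (\<exists>b h. b < m \<and> h \<in> VH \<and> w = Inr (cycle_edge m b, h))"
    if "w \<in> V" for w
    using that by (auto simp: V_eq)
  from this[OF assms(1)] this[OF assms(2)] show ?thesis
    using short_arc_joined_Inl_Inl short_arc_joined_Inl_Inr short_arc_joined_Inr_Inr
      short_arc_joined_sym by blast
qed

lemma rainbow_cycle_mod_colouring:
  assumes "0 < K"
    and inj: "\<And>s L. L \<le> m div 2 \<Longrightarrow> inj_on (\<lambda>i. i mod K) (set (cycle_arc m s L))"
  shows "rainbow_vertex_coloring V E K (cycle_mod_colouring K)"
  unfolding rainbow_vertex_coloring_def
proof (intro conjI ballI)
  fix v assume "v \<in> V"
  show "cycle_mod_colouring K v \<in> {1..K}"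
    using assms(1) by (cases v) (auto simp: cycle_mod_colouring_def Suc_le_eq)
next
  fix u v assume "u \<in> V" "v \<in> V"
  then obtain p s L where p: "is_path V E p" "hd p = u" "last p = v" "L \<le> m div 2"
    "internal p \<subseteq> Inl ` set (cycle_arc m s L)"
    using short_arc_joined_all unfolding short_arc_joined_def by blast
  have "inj_on (cycle_mod_colouring K) (Inl ` set (cycle_arc m s L))"
    using inj[OF p(4), of s] by (auto simp: inj_on_def cycle_mod_colouring_def)
  then show "\<exists>p. is_path V E p \<and> hd p = u \<and> last p = v \<and>
      inj_on (cycle_mod_colouring K) (internal p)"
    using p inj_on_subset by blast
qed

lemma rainbow_colouring_exists:
  "\<exists>c. rainbow_vertex_coloring V E (if m = 3 then 1 else m - m div 2) c"
proof (cases "m = 3")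
  case True
  have "inj_on (\<lambda>i. i mod 1) (set (cycle_arc m s L))" if "L \<le> m div 2" for s L
    using that True by (auto simp: cycle_arc_def le_Suc_eq)
  then show ?thesis using True rainbow_cycle_mod_colouring[of 1] by auto
next
  case False
  have "inj_on (\<lambda>i. i mod (m - m div 2)) (set (cycle_arc m s L))" if "L \<le> m div 2" for s L
    using that by (intro inj_on_mod_cycle_arc) linarith+
  then show ?thesis using False rainbow_cycle_mod_colouring[of "m - m div 2"] by auto
qed

end

section \<open>Lower bounds from potentials\<close>

context cycle_corona
begin

definition edge_index :: "nat set \<Rightarrow> nat" where
  "edge_index e = (THE b. b < m \<and> e = cycle_edge m b)"

lemma edge_index_cycle_edge: "b < m \<Longrightarrow> edge_index (cycle_edge m b) = b"
  unfolding edge_index_def by (rule the_equality) (auto dest: cycle_edge_inj[OF three_le_m])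

definition corona_potential ::
    "(nat \<Rightarrow> int) \<Rightarrow> (nat \<Rightarrow> int) \<Rightarrow> nat + nat set \<times> 'b \<Rightarrow> int" where
  "corona_potential g h y = (case y of Inl a \<Rightarrow> g a | Inr (e, _) \<Rightarrow> h (edge_index e))"

lemma corona_potential_path_bound:
  assumes g: "\<And>b. b < m \<Longrightarrow> b \<notin> X \<Longrightarrow> Suc b mod m \<notin> X \<Longrightarrow>
      \<bar>g b - g (Suc b mod m)\<bar> \<le> 1"
    and h: "\<And>b x. b < m \<Longrightarrow> x \<in> cycle_edge m b \<Longrightarrow> x \<notin> X \<Longrightarrow>
      \<bar>h b - g x\<bar> \<le> 1"
    and p: "is_path V E p" "Inl ` X \<inter> set p = {}"
  shows "\<bar>corona_potential g h (hd p) - corona_potential g h (last p)\<bar> \<le> int (length p) - 1"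
proof -
  let ?F = "corona_potential g h"
  have step: "\<bar>?F y - ?F z\<bar> \<le> 1" if "{y, z} \<in> E" "y \<notin> Inl ` X" "z \<notin> Inl ` X" for y z
    using that(1)
  proof (cases rule: corona_E_cases)
    case (cycle b)
    then have "b \<notin> X" "Suc b mod m \<notin> X"
      using that(2,3) by (auto simp: doubleton_eq_iff)
    then show ?thesis
      using g[of b] cycle by (auto simp: corona_potential_def doubleton_eq_iff abs_minus_commute)
  next
    case (copy e x x')
    then show ?thesis by (auto simp: corona_potential_def doubleton_eq_iff)
  next
    case (spoke b x w)
    then have "x \<notin> X"
      using that(2,3) by (auto simp: doubleton_eq_iff)
    then show ?thesis
      using h[of b x] spoke
      by (auto simp: corona_potential_def doubleton_eq_iff image_iff edge_index_cycle_edge abs_minus_commute)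
  qed
  have "p \<noteq> []" using p(1) by (simp add: is_path_def)
  have "successively (\<lambda>y z. {y, z} \<in> E) p"
    using p(1) by (simp add: is_path_iff_successively)
  then have "successively (\<lambda>y z. \<bar>?F y - ?F z\<bar> \<le> 1) p"
    by (rule successively_mono) (use step p(2) in blast)
  then show ?thesis using \<open>p \<noteq> []\<close> by (rule potential_path_bound)
qed

lemma opposite_edges_path_length:
  assumes m: "m = 2 * r" and p: "is_path V E p"
    and hd: "hd p = Inr (cycle_edge m 0, w)" and last: "last p = Inr (cycle_edge m r, w')"
  shows "r + 2 \<le> length p"
proof -
  have r: "2 \<le> r" "r < m" using m three_le_m by linarith+
  \<comment> \<open>\<open>g a\<close> is one more than the distance from \<open>a\<close> to the edge \<open>{0, 1}\<close>.\<close>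
  define g where "g a = (if a = 0 then 1 else if a \<le> r then int a else int m + 1 - int a)" for a
  define h where "h b = (if b = 0 then 0 else if b = r then int r + 1 else g b)" for b
  have "\<bar>g b - g (Suc b mod m)\<bar> \<le> 1" if "b < m" for b
    using that m r by (auto simp: g_def Suc_mod_eq_if split: if_splits)
  moreover have "\<bar>h b - g x\<bar> \<le> 1" if "b < m" "x \<in> cycle_edge m b" for b x
    using that m r by (auto simp: h_def g_def cycle_edge_def Suc_mod_eq_if split: if_splits)
  ultimately have "\<bar>corona_potential g h (hd p) - corona_potential g h (last p)\<bar> \<le> int (length p) - 1"
    using p by (intro corona_potential_path_bound[where X = "{}"]) auto
  then show ?thesis
    using hd last r by (simp add: corona_potential_def edge_index_cycle_edge h_def)
qed

lemma corona_potential_around_gap: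
  fixes x q :: nat
  defines "g \<equiv> cycle_dist m (Suc x)"
    and "h \<equiv> \<lambda>b. cycle_dist m (Suc x) (Suc b mod m) - (if b = q then 1 else 0)"
  assumes "x < m" "is_path V E p" "Inl x \<notin> set p"
  shows "\<bar>corona_potential g h (hd p) - corona_potential g h (last p)\<bar> \<le> int (length p) - 1"
proof -
  have g_Suc: "g (Suc b mod m) = g b + 1" if "b < m" "b \<noteq> x" for b
  proof -
    have "Suc b mod m \<noteq> Suc x mod m"
      using that assms(3) mod_add_left_cancel_iff[of b m x 1] by simp
    then show ?thesis unfolding g_def by (rule cycle_dist_Suc[OF m_pos])
  qed
  have "\<bar>g b - g (Suc b mod m)\<bar> \<le> 1" if "b < m" "b \<notin> {x}" "Suc b mod m \<notin> {x}" for b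
    using g_Suc that by simp
  moreover have "\<bar>h b - g y\<bar> \<le> 1" if "b < m" "y \<in> cycle_edge m b" "y \<notin> {x}" for b y
    using that g_Suc[of b] by (auto simp: h_def g_def cycle_edge_def)
  moreover have "Inl ` {x} \<inter> set p = {}" using assms(5) by simp
  ultimately show ?thesis
    using corona_potential_path_bound[where X = "{x}" and g = g and h = h] assms(4) by blast
qed

lemma detour_path_length:
  assumes m: "m = 2 * r + 1" and "t < r"
    and p: "is_path V E p"
    and hd: "hd p = Inr (cycle_edge m ((s + (m - 1)) mod m), w)"
    and last: "last p = Inr (cycle_edge m ((s + (r - 1)) mod m), w')"
    and avoid: "Inl ((s + t) mod m) \<notin> set p"
  shows "r + 3 \<le> length p"
proof -
  define x where "x = (s + t) mod m"
  define qv where "qv = (s + (r - 1)) mod m"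
  \<comment> \<open>\<open>g\<close> is the distance along the cycle from the vertex after the missing \<open>x\<close>. A copy
    of \<open>H\<close> gets the value of the far end of its edge, except the target copy, which gets
    that of its near end.\<close>
  define g where "g = cycle_dist m (Suc x)"
  define h where "h b = g (Suc b mod m) - (if b = qv then 1 else 0)" for b
  have bound: "\<bar>corona_potential g h (hd p) - corona_potential g h (last p)\<bar> \<le> int (length p) - 1"
    unfolding g_def h_def using avoid p by (intro corona_potential_around_gap) (simp_all add: x_def)
  have g_eq: "g = cycle_dist m ((s + Suc t) mod m)"
    unfolding g_def x_def by (metis cycle_dist_mod_left mod_Suc_eq add_Suc_right)
  have "t < m" "r < m" "(s + (m - 1)) mod m \<noteq> qv"
    using \<open>t < r\<close> m mod_add_left_cancel_iff[of "m - 1" m "r - 1" s] by (simp_all add: qv_def)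
  then have "corona_potential g h (hd p) = g ((s + 0) mod m)"
    using hd Suc_mod_add_pred[OF m_pos, of s]
    by (simp add: corona_potential_def edge_index_cycle_edge h_def)
  also have "\<dots> = int (m - Suc t)"
    unfolding g_eq using cycle_dist_add_add_gt[of 0 "Suc t" m s] \<open>t < m\<close> by simp
  finally have hd_value: "corona_potential g h (hd p) = int (m - Suc t)" .
  have "Suc qv mod m = (s + r) mod m"
    using \<open>t < r\<close> by (simp add: qv_def mod_Suc_eq)
  moreover have "last p = Inr (cycle_edge m qv, w')" using last by (simp add: qv_def)
  ultimately have "corona_potential g h (last p) = g ((s + r) mod m) - 1"
    by (simp add: corona_potential_def edge_index_cycle_edge h_def qv_def)
  also have "g ((s + r) mod m) = int (r - Suc t)"
    unfolding g_eq using \<open>t < r\<close> \<open>r < m\<close> by (intro cycle_dist_add_add_le) simp_all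
  finally have "corona_potential g h (last p) = int (r - Suc t) - 1" .
  then show ?thesis using bound hd_value m \<open>t < r\<close> by simp
qed

lemma odd_window_injective:
  assumes m: "m = 2 * r + 1" and c: "rainbow_vertex_coloring V E k c" and "k \<le> r"
  shows "inj_on (c \<circ> Inl) (set (cycle_arc m s r))"
proof -
  obtain w where w: "w \<in> VH" using VH_nonempty by blast
  let ?u = "Inr (cycle_edge m ((s + (m - 1)) mod m), w)"
  let ?v = "Inr (cycle_edge m ((s + (r - 1)) mod m), w)"
  have "?u \<in> V" "?v \<in> V" using w by (simp_all add: Inr_in_V)
  then obtain p where p: "is_path V E p" "hd p = ?u" "last p = ?v" "inj_on c (internal p)"
    using c unfolding rainbow_vertex_coloring_def by blast
  have "length p < r + 3"
    using card_internal_le_colours[OF c p(1,4)] card_internal[of p] p(1) \<open>k \<le> r\<close>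
    by (simp add: is_path_def)
  then have "Inl ((s + t) mod m) \<in> set p" if "t < r" for t
    using detour_path_length[OF m that p(1,2,3)] by (meson not_le)
  then have "Inl ` set (cycle_arc m s r) \<subseteq> internal p"
    using p(2,3) by (auto simp: mem_cycle_arc intro!: internalI)
  then have "inj_on c (Inl ` set (cycle_arc m s r))" using p(4) inj_on_subset by blast
  then show ?thesis by (rule comp_inj_on[rotated]) (simp add: inj_on_def)
qed

lemma rainbow_colours_lower_bound:
  assumes c: "rainbow_vertex_coloring V E k c"
  shows "(if m = 3 then 1 else m - m div 2) \<le> k"
proof (cases "m = 3")
  case True
  have "c (Inl 0) \<in> {1..k}" using c Inl_in_V[of 0] by (simp add: rainbow_vertex_coloring_def)
  then show ?thesis using True by simp
next
  case False
  show ?thesis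
  proof (cases "even m")
    case True
    then obtain r where m: "m = 2 * r" by blast
    obtain w where w: "w \<in> VH" using VH_nonempty by blast
    have "r < m" using m three_le_m by linarith
    have "r \<le> k"
    proof (rule rainbow_colours_ge_of_long_paths[OF c,
          of "Inr (cycle_edge m 0, w)" "Inr (cycle_edge m r, w)"])
      show "Inr (cycle_edge m 0, w) \<in> V" "Inr (cycle_edge m r, w) \<in> V"
        using w \<open>r < m\<close> by (simp_all add: Inr_in_V)
    qed (rule opposite_edges_path_length[OF m])
    then show ?thesis using m False by simp
  next
    case odd: False
    then obtain r where m: "m = 2 * r + 1" using oddE by blast
    have "2 \<le> r" using m False three_le_m by linarith
    show ?thesis
    proof (rule ccontr)
      assume "\<not> ?thesis"
      then have "k \<le> r" using m False by simp
      have "(c \<circ> Inl) x \<in> {1..k}" if "x < m" for x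
        using c Inl_in_V[OF that] by (simp add: rainbow_vertex_coloring_def)
      then show False
        using cyclic_windows_not_rainbow[OF m \<open>2 \<le> r\<close> \<open>k \<le> r\<close>]
          odd_window_injective[OF m c \<open>k \<le> r\<close>] by blast
    qed
  qed
qed

end

theorem theorem6:
  fixes m n :: nat and VH :: "'b set" and EH :: "'b set set"
  assumes "m \<ge> 3" and "n \<ge> 2"
    and "simple_graph VH EH" and "connected_graph VH EH" and "card VH = n"
  shows "rvc (corona_V (cycle_V m) (cycle_E m) VH)
             (corona_E (cycle_V m) (cycle_E m) VH EH)
         = (if m = 3 then 1 else nat \<lceil>real m / 2\<rceil>)"
proof -
  have "VH \<noteq> {}" using assms(2,5) by auto
  then interpret cycle_corona m VH EH
    using assms(1) by unfold_locales
  have "rvc V E = (if m = 3 then 1 else m - m div 2)"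
    unfolding rvc_def using rainbow_colouring_exists rainbow_colours_lower_bound
    by (intro Least_equality) auto
  then show ?thesis by (simp add: nat_ceiling_half)
qed

end
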